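(* Let $(A_i,\omega_i)$, $i=1,2$, be associative baric algebras over $K$. Then the following are equivalent: (i) $A_1\bowtie A_2$ is associative; (ii) $A_1\bowtie A_2$ is left alternative; (iii) $A_1\bowtie A_2$ is right alternative.
   Context: A baric algebra over a field $K$ is a pair $(A,\omega)$ where $A$ is a (not necessarily associative) $K$-algebra and $\omega:A\to K$ is a nonzero $K$-algebra homomorphism. For baric algebras $(A_1,\omega_1),(A_2,\omega_2)$, $A_1\bowtie A_2$ denotes the vector space $A_1\oplus A_2$ with product $(a_1,a_2)(b_1,b_2)=(a_1b_1+\omega_2(b_2)a_1,\ a_2b_2+\omega_1(b_1)a_2)$. With associator $(x,y,z)=(xy)z-x(yz)$, an algebra is left alternative if $(x,x,y)=0$ for all $x,y$, and right alternative if $(x,y,y)=0$ for all $x,y$. *)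

theory Defs
  imports Complex_Main "HOL-Library.Product_Plus"
begin

definition K_algebra :: "('k::field \<Rightarrow> 'a::ab_group_add \<Rightarrow> 'a) \<Rightarrow> ('a \<Rightarrow> 'a \<Rightarrow> 'a) \<Rightarrow> bool" where
  "K_algebra scale mult \<longleftrightarrow>
     Vector_Spaces.vector_space scale \<and>
     (\<forall>x y z. mult (x + y) z = mult x z + mult y z) \<and>
     (\<forall>x y z. mult x (y + z) = mult x y + mult x z) \<and>
     (\<forall>c x y. mult (scale c x) y = scale c (mult x y)) \<and>
     (\<forall>c x y. mult x (scale c y) = scale c (mult x y))"

definition baric_algebra ::
  "('k::field \<Rightarrow> 'a::ab_group_add \<Rightarrow> 'a) \<Rightarrow> ('a \<Rightarrow> 'a \<Rightarrow> 'a) \<Rightarrow> ('a \<Rightarrow> 'k) \<Rightarrow> bool" where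
  "baric_algebra scale mult \<omega> \<longleftrightarrow>
     K_algebra scale mult \<and>
     Vector_Spaces.linear scale (*) \<omega> \<and>
     (\<forall>x y. \<omega> (mult x y) = \<omega> x * \<omega> y) \<and>
     \<omega> \<noteq> (\<lambda>_. 0)"

definition associator :: "('a::ab_group_add \<Rightarrow> 'a \<Rightarrow> 'a) \<Rightarrow> 'a \<Rightarrow> 'a \<Rightarrow> 'a \<Rightarrow> 'a" where
  "associator mult x y z = mult (mult x y) z - mult x (mult y z)"

definition associative_alg :: "('a::ab_group_add \<Rightarrow> 'a \<Rightarrow> 'a) \<Rightarrow> bool" where
  "associative_alg mult \<longleftrightarrow> (\<forall>x y z. associator mult x y z = 0)"

definition left_alternative :: "('a::ab_group_add \<Rightarrow> 'a \<Rightarrow> 'a) \<Rightarrow> bool" where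
  "left_alternative mult \<longleftrightarrow> (\<forall>x y. associator mult x x y = 0)"

definition right_alternative :: "('a::ab_group_add \<Rightarrow> 'a \<Rightarrow> 'a) \<Rightarrow> bool" where
  "right_alternative mult \<longleftrightarrow> (\<forall>x y. associator mult x y y = 0)"

text \<open>The product of A1 \<bowtie> A2 on the vector space A1 \<oplus> A2 (= 'a \<times> 'b, componentwise structure).\<close>
definition bowtie_mult ::
  "('k::field \<Rightarrow> 'a::ab_group_add \<Rightarrow> 'a) \<Rightarrow> ('a \<Rightarrow> 'a \<Rightarrow> 'a) \<Rightarrow> ('a \<Rightarrow> 'k) \<Rightarrow>
   ('k \<Rightarrow> 'b::ab_group_add \<Rightarrow> 'b) \<Rightarrow> ('b \<Rightarrow> 'b \<Rightarrow> 'b) \<Rightarrow> ('b \<Rightarrow> 'k) \<Rightarrow>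
   'a \<times> 'b \<Rightarrow> 'a \<times> 'b \<Rightarrow> 'a \<times> 'b" where
  "bowtie_mult scale1 mult1 \<omega>1 scale2 mult2 \<omega>2 x y =
     (mult1 (fst x) (fst y) + scale1 (\<omega>2 (snd y)) (fst x),
      mult2 (snd x) (snd y) + scale2 (\<omega>1 (fst y)) (snd x))"

end

theory Submission
  imports Defs
begin

(* Write x = (x1, x2) for elements of A1 \<bowtie> A2.  When A1 is associative
   and \<omega>2 is a weight, a direct expansion gives the first component of the associator:
       (x, y, z)_1 = \<omega>2(y2) (x1 z1 - \<omega>1(z1) x1).
   The construction is symmetric under swapping the two factors, so the second component is
   \<omega>1(y1) (x2 z2 - \<omega>2(z2) x2).  Hence all three properties are equivalent to the condition
   that in both factors the product is the "weight product"  x y = \<omega>(y) x: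
   - weight products make every associator vanish, so A1 \<bowtie> A2 is associative;
   - associativity trivially implies left and right alternativity;
   - with \<omega>2(v) \<noteq> 0, the first component of (x, x, y) for x = (a, v), y = (c, 0), resp.
     of (x, y, y) for x = (a, 0), y = (c, v), is \<omega>2(v) (a c - \<omega>1(c) a); so either
     alternative law forces a c = \<omega>1(c) a in A1, and symmetrically in A2. *)

definition weight_product ::
  "('k::field \<Rightarrow> 'a::ab_group_add \<Rightarrow> 'a) \<Rightarrow> ('a \<Rightarrow> 'a \<Rightarrow> 'a) \<Rightarrow> ('a \<Rightarrow> 'k) \<Rightarrow> bool" where
  "weight_product scale mult \<omega> \<longleftrightarrow> (\<forall>a c. mult a c = scale (\<omega> c) a)"

lemma associative_algD:
  assumes "associative_alg mult"
  shows "mult (mult p q) r = mult p (mult q r)"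
  using assms unfolding associative_alg_def associator_def by (metis eq_iff_diff_eq_0)

lemma associative_imp_alternative:
  assumes "associative_alg mult"
  shows "left_alternative mult" and "right_alternative mult"
  using assms unfolding associative_alg_def left_alternative_def right_alternative_def by blast+

lemma baric_algebra_nonzero_weight:
  assumes "baric_algebra scale mult \<omega>"
  obtains v where "\<omega> v \<noteq> 0"
  using assms unfolding baric_algebra_def by fastforce

lemma bowtie_mult_swap:
  "bowtie_mult scale1 mult1 \<omega>1 scale2 mult2 \<omega>2 x y =
     prod.swap (bowtie_mult scale2 mult2 \<omega>2 scale1 mult1 \<omega>1 (prod.swap x) (prod.swap y))"
  by (simp add: bowtie_mult_def)

lemma associator_bowtie_swap:
  "associator (bowtie_mult scale1 mult1 \<omega>1 scale2 mult2 \<omega>2) x y z =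
     prod.swap (associator (bowtie_mult scale2 mult2 \<omega>2 scale1 mult1 \<omega>1)
                 (prod.swap x) (prod.swap y) (prod.swap z))"
proof -
  have swap_diff: "prod.swap (p - q) = prod.swap p - prod.swap q"
    for p q :: "'u::ab_group_add \<times> 'v::ab_group_add"
    by (cases p, cases q) simp
  show ?thesis
    by (simp add: associator_def swap_diff bowtie_mult_swap[of scale1 mult1 \<omega>1 scale2 mult2 \<omega>2])
qed

lemma bowtie_left_alternative_from_swap:
  assumes "left_alternative (bowtie_mult scale2 mult2 \<omega>2 scale1 mult1 \<omega>1)"
  shows "left_alternative (bowtie_mult scale1 mult1 \<omega>1 scale2 mult2 \<omega>2)"
  using assms by (simp add: left_alternative_def associator_bowtie_swap[of scale1] zero_prod_def)

lemma bowtie_right_alternative_from_swap: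
  assumes "right_alternative (bowtie_mult scale2 mult2 \<omega>2 scale1 mult1 \<omega>1)"
  shows "right_alternative (bowtie_mult scale1 mult1 \<omega>1 scale2 mult2 \<omega>2)"
  using assms by (simp add: right_alternative_def associator_bowtie_swap[of scale1] zero_prod_def)

lemma fst_associator_bowtie:
  assumes alg1: "K_algebra scale1 mult1" and assoc1: "associative_alg mult1"
    and baric2: "baric_algebra scale2 mult2 \<omega>2"
  shows "fst (associator (bowtie_mult scale1 mult1 \<omega>1 scale2 mult2 \<omega>2) x y z) =
    scale1 (\<omega>2 (snd y)) (mult1 (fst x) (fst z) - scale1 (\<omega>1 (fst z)) (fst x))"
proof -
  interpret v1: Vector_Spaces.vector_space scale1
    using alg1 by (simp add: K_algebra_def)
  interpret w2: Vector_Spaces.linear scale2 "(*)" \<omega>2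
    using baric2 by (simp add: baric_algebra_def)
  have bilinear1: "mult1 (p + q) r = mult1 p r + mult1 q r" "mult1 p (q + r) = mult1 p q + mult1 p r"
    "mult1 (scale1 c p) q = scale1 c (mult1 p q)" "mult1 p (scale1 c q) = scale1 c (mult1 p q)"
    for p q r c using alg1 by (simp_all add: K_algebra_def)
  have mult_weight2: "\<omega>2 (mult2 p q) = \<omega>2 p * \<omega>2 q" for p q
    using baric2 by (simp add: baric_algebra_def)
  obtain a a' where x: "x = (a, a')" by (cases x)
  obtain b b' where y: "y = (b, b')" by (cases y)
  obtain c c' where z: "z = (c, c')" by (cases z)
  let ?M = "bowtie_mult scale1 mult1 \<omega>1 scale2 mult2 \<omega>2"
  have left: "fst (?M (?M x y) z) = mult1 (mult1 a b) c + scale1 (\<omega>2 b') (mult1 a c)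
      + scale1 (\<omega>2 c') (mult1 a b) + scale1 (\<omega>2 c' * \<omega>2 b') a"
    by (simp add: x y z bowtie_mult_def bilinear1 v1.scale_right_distrib)
  have right: "fst (?M x (?M y z)) = mult1 a (mult1 b c) + scale1 (\<omega>2 c') (mult1 a b)
      + scale1 (\<omega>2 b' * \<omega>2 c' + \<omega>1 c * \<omega>2 b') a"
    by (simp add: x y z bowtie_mult_def bilinear1 mult_weight2 w2.add w2.scale)
  show ?thesis
    unfolding associator_def fst_diff left right
    by (simp add: x y z associative_algD[OF assoc1] v1.scale_left_distrib
        v1.scale_right_diff_distrib algebra_simps)
qed

lemma fst_associator_bowtie_eq_0:
  assumes "baric_algebra scale1 mult1 \<omega>1" and "associative_alg mult1"
    and "baric_algebra scale2 mult2 \<omega>2" and "weight_product scale1 mult1 \<omega>1"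
  shows "fst (associator (bowtie_mult scale1 mult1 \<omega>1 scale2 mult2 \<omega>2) x y z) = 0"
proof -
  interpret v1: Vector_Spaces.vector_space scale1
    using assms(1) by (simp add: baric_algebra_def K_algebra_def)
  show ?thesis
    using assms by (simp add: fst_associator_bowtie baric_algebra_def weight_product_def)
qed

text \<open>Weight products on both factors make A1 \<bowtie> A2 associative; the second component
  is handled by the swap symmetry.\<close>
lemma bowtie_associative_if_weight_products:
  assumes "baric_algebra scale1 mult1 \<omega>1" and "associative_alg mult1"
    and "baric_algebra scale2 mult2 \<omega>2" and "associative_alg mult2"
    and "weight_product scale1 mult1 \<omega>1" and "weight_product scale2 mult2 \<omega>2"
  shows "associative_alg (bowtie_mult scale1 mult1 \<omega>1 scale2 mult2 \<omega>2)"
proof -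
  have "associator (bowtie_mult scale1 mult1 \<omega>1 scale2 mult2 \<omega>2) x y z = 0" for x y z
  proof (rule prod_eqI)
    show "fst (associator (bowtie_mult scale1 mult1 \<omega>1 scale2 mult2 \<omega>2) x y z) = fst 0"
      using fst_associator_bowtie_eq_0 assms by simp
    show "snd (associator (bowtie_mult scale1 mult1 \<omega>1 scale2 mult2 \<omega>2) x y z) = snd 0"
      using fst_associator_bowtie_eq_0[of scale2 mult2 \<omega>2 scale1 mult1 \<omega>1] assms
      by (simp add: associator_bowtie_swap[of scale1])
  qed
  then show ?thesis by (simp add: associative_alg_def)
qed

text \<open>Either alternative law for A1 \<bowtie> A2 forces the weight product on A1: the factor
  \<omega>2(y2) in the associator formula can be made nonzero.\<close>
lemma weight_product_if_alternative:
  assumes baric1: "baric_algebra scale1 mult1 \<omega>1" and assoc1: "associative_alg mult1"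
    and baric2: "baric_algebra scale2 mult2 \<omega>2"
    and alt: "left_alternative (bowtie_mult scale1 mult1 \<omega>1 scale2 mult2 \<omega>2) \<or>
              right_alternative (bowtie_mult scale1 mult1 \<omega>1 scale2 mult2 \<omega>2)"
  shows "weight_product scale1 mult1 \<omega>1"
  unfolding weight_product_def
proof (intro allI)
  fix a c
  interpret v1: Vector_Spaces.vector_space scale1
    using baric1 by (simp add: baric_algebra_def K_algebra_def)
  have alg1: "K_algebra scale1 mult1" using baric1 by (simp add: baric_algebra_def)
  obtain v where v: "\<omega>2 v \<noteq> 0" using baric_algebra_nonzero_weight[OF baric2] .
  note fst_assoc = fst_associator_bowtie[OF alg1 assoc1 baric2, of \<omega>1]
  have "fst (associator (bowtie_mult scale1 mult1 \<omega>1 scale2 mult2 \<omega>2) (a, v) (a, v) (c, 0)) = 0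
      \<or> fst (associator (bowtie_mult scale1 mult1 \<omega>1 scale2 mult2 \<omega>2) (a, 0) (c, v) (c, v)) = 0"
    using alt unfolding left_alternative_def right_alternative_def by (auto simp: zero_prod_def)
  then have "scale1 (\<omega>2 v) (mult1 a c - scale1 (\<omega>1 c) a) = 0"
    unfolding fst_assoc by auto
  then show "mult1 a c = scale1 (\<omega>1 c) a" using v by simp
qed

theorem proposition6p2:
  fixes scale1 :: "'k::field \<Rightarrow> 'a::ab_group_add \<Rightarrow> 'a" and mult1 :: "'a \<Rightarrow> 'a \<Rightarrow> 'a"
    and \<omega>1 :: "'a \<Rightarrow> 'k"
    and scale2 :: "'k \<Rightarrow> 'b::ab_group_add \<Rightarrow> 'b" and mult2 :: "'b \<Rightarrow> 'b \<Rightarrow> 'b"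
    and \<omega>2 :: "'b \<Rightarrow> 'k"
  assumes "baric_algebra scale1 mult1 \<omega>1" and "associative_alg mult1"
    and "baric_algebra scale2 mult2 \<omega>2" and "associative_alg mult2"
  shows "(associative_alg (bowtie_mult scale1 mult1 \<omega>1 scale2 mult2 \<omega>2)
            \<longleftrightarrow> left_alternative (bowtie_mult scale1 mult1 \<omega>1 scale2 mult2 \<omega>2))
       \<and> (left_alternative (bowtie_mult scale1 mult1 \<omega>1 scale2 mult2 \<omega>2)
            \<longleftrightarrow> right_alternative (bowtie_mult scale1 mult1 \<omega>1 scale2 mult2 \<omega>2))"
proof -
  let ?M = "bowtie_mult scale1 mult1 \<omega>1 scale2 mult2 \<omega>2"
  have weight_products: "weight_product scale1 mult1 \<omega>1 \<and> weight_product scale2 mult2 \<omega>2"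
    if "left_alternative ?M \<or> right_alternative ?M"
  proof
    show "weight_product scale1 mult1 \<omega>1"
      using weight_product_if_alternative assms that by blast
    show "weight_product scale2 mult2 \<omega>2"
      using weight_product_if_alternative[of scale2 mult2 \<omega>2 scale1 mult1 \<omega>1] assms that
        bowtie_left_alternative_from_swap[of scale1 mult1 \<omega>1 scale2 mult2 \<omega>2]
        bowtie_right_alternative_from_swap[of scale1 mult1 \<omega>1 scale2 mult2 \<omega>2]
      by blast
  qed
  then have "left_alternative ?M \<or> right_alternative ?M \<Longrightarrow> associative_alg ?M"
    using bowtie_associative_if_weight_products assms by blast
  then show ?thesis using associative_imp_alternative by blast
qed

end
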